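(* For all $c\in\mathbb{N}^+$ with $c>1$, as $n\to\infty$, $$\sup\left\{\frac{|f|_{\mathcal{C}}}{|f|_{\mathcal{U}^c}}: f\in H^n,\ |f|_{\mathcal{U}^c}<+\infty\right\}\in\Omega(n\log n).$$
   Context: Let $\mathcal{B}=\{0,1\}$, let $\mathcal{B}^*$ be the set of finite binary strings and $|h|$ the length of $h\in\mathcal{B}^*$. For $n\in\mathbb{N}^+$, $H^n$ is the set of all functions $\mathcal{B}^n\to\mathcal{B}$. An interpreter is a Turing machine computing a partial function $\varphi:\mathcal{B}^*\times\mathcal{B}^*\to\mathcal{B}\cup\{\bot\}$, where $\bot$ denotes non-halting (or invalid) output. For $f\in H^n$, $|f|_\varphi=\min\{|h|:\varphi(h,x)=f(x)\ \forall x\in\mathcal{B}^n\}$ ($+\infty$ if no such $h$). Turing machines have alphabet $\{0,1,b\}$ ($b$ blank), a finite state set containing an initial state and two final states accept/reject; the output is $1$ if halting in accept, $0$ if halting in reject, $\bot$ otherwise; multi-tape machines have read-only input tapes and read/write work tapes, and the transition function is a finite list of rules. $E(T)$ is a fixed prefix-free binary encoding of a machine $T$ listing its rules (of length at least 2 for every machine). For $c\in\mathbb{N}^+$, $\mathcal{U}^c$ is a time-bounded universal interpreter (a 2-input-tape, 3-work-tape machine): on $(p,x)$ with $n=|x|$, it checks within $n^c$ steps whether $p=E(T)u$ for a two-input-tape machine $T$ and $u\in\mathcal{B}^*$ (outputting $\bot$ if not, or if the check does not finish), then simulates $T$ on $(u,x)$ with an efficient universal simulation (Hennie–Stearns, overhead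 $O(t\log t)$ for $t$ simulated steps), devoting at most $n^c$ of its own steps to the simulation; it outputs $T$'s output if $T$ halts within this budget and $0$ otherwise. For fixed $p$ it runs in at most $\beta n^c$ steps for a constant $\beta$. In particular, if a Turing machine computes $g:\mathcal{B}^*\to\mathcal{B}$ in time $O(n^{c'})$ with $c'<c$, there is $h\in\mathcal{B}^*$ with $\mathcal{U}^c(h,x)=g(x)$ for all $x$ of sufficiently large length. A Boolean circuit on $n$ inputs is a DAG with a unique sink (output) whose sources are labelled by input indices in $\{1,\dots,n\}$ and whose other vertices (gates) are labelled AND, OR (two incoming edges) or NOT (one incoming edge); its size $|C|$ is its number of vertices. The circuit interpreter $\mathcal{C}$ reads a program $h=0^{\lceil\log_2 n\rceil}1\,[\text{binary expansion of } n]\,0^{|C|}1\,[\text{description of vertex } i]_{i=1}^{|C|}$, each vertex being described by its label and its parents/input index using $\max\{2\lceil\log_2|C|\rceil,\lceil\log_2 n\rceil\}$ bits beyond the label bits, so a circuit $C$ on $n$ inputs has encoding length $L(|C|,n)=2\lceil\log_2 n\rceil+2+|C|(3+\max\{2\lceil\log_2|C|\rceil,\lceil\log_2 n\rceil\})$; $\mathcal{C}(h,x)$ is the circuit's output on $x\in\mathcal{B}^n$, and $\bot$ if $h$ is malformed. Hence $|f|_{\mathcal{C}}=\min\{L(|C|,n): C \text{ computes } f\}$. *)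

theory Defs
  imports Complex_Main "HOL-Library.Landau_Symbols"
begin

text \<open>Binary strings are bool lists; an interpreter is a map
  bool list => bool list => bool option, where None is the undefined output.
  A function f in H^n is any f :: bool list => bool, only its values on
  strings of length n matter.\<close>

type_synonym interp = "bool list \<Rightarrow> bool list \<Rightarrow> bool option"

definition has_prog :: "interp \<Rightarrow> nat \<Rightarrow> (bool list \<Rightarrow> bool) \<Rightarrow> bool" where
  "has_prog \<phi> n f \<longleftrightarrow> (\<exists>h. \<forall>x. length x = n \<longrightarrow> \<phi> h x = Some (f x))"

text \<open>|f|_phi (meaningful when has_prog holds; otherwise it is +infinity in the paper).\<close>
definition prog_size :: "interp \<Rightarrow> nat \<Rightarrow> (bool list \<Rightarrow> bool) \<Rightarrow> nat" where
  "prog_size \<phi> n f =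
     (LEAST k. \<exists>h. length h = k \<and> (\<forall>x. length x = n \<longrightarrow> \<phi> h x = Some (f x)))"

datatype sym = S0 | S1 | Blank
datatype mv = MoveL | MoveN | MoveR

text \<open>States are natural numbers: 0 initial, 1 accept, 2 reject.
  A rule (q, reads, q', writes, moves): in state q reading the symbols reads
  (input tapes first, then work tapes) go to q', write writes on the work
  tapes, and move all heads by moves.\<close>
record tm =
  ninp :: nat
  nwork :: nat
  rules :: "(nat \<times> sym list \<times> nat \<times> sym list \<times> mv list) list"

definition wf_tm :: "tm \<Rightarrow> bool" where
  "wf_tm M \<longleftrightarrow>
     (\<forall>(q, rd, q', wr, mvs) \<in> set (rules M).
        q \<noteq> 1 \<and> q \<noteq> 2 \<and> length rd = ninp M + nwork M \<and>
        length wr = nwork M \<and> length mvs = ninp M + nwork M) \<and>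
     distinct (map (\<lambda>r. (fst r, fst (snd r))) (rules M))"

record config =
  cstate :: nat
  ipos :: "int list"
  wtapes :: "(int \<Rightarrow> sym) list"
  wpos :: "int list"

definition tape_of :: "bool list \<Rightarrow> int \<Rightarrow> sym" where
  "tape_of x i = (if 0 \<le> i \<and> i < int (length x) then (if x ! nat i then S1 else S0) else Blank)"

fun mv_delta :: "mv \<Rightarrow> int" where
  "mv_delta MoveL = -1" | "mv_delta MoveN = 0" | "mv_delta MoveR = 1"

definition init_config :: "tm \<Rightarrow> config" where
  "init_config M = \<lparr>cstate = 0, ipos = replicate (ninp M) 0,
      wtapes = replicate (nwork M) (\<lambda>_. Blank), wpos = replicate (nwork M) 0\<rparr>"

text \<open>One step on inputs xs. Halted configurations (state 1 or 2) are fixed;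
  a configuration with no applicable rule is stuck forever (never halts).\<close>
definition tm_step :: "tm \<Rightarrow> bool list list \<Rightarrow> config \<Rightarrow> config" where
  "tm_step M xs cf =
    (if cstate cf = 1 \<or> cstate cf = 2 then cf else
     (let reads = map2 tape_of xs (ipos cf) @ map2 (\<lambda>t p. t p) (wtapes cf) (wpos cf) in
      case find (\<lambda>r. fst r = cstate cf \<and> fst (snd r) = reads) (rules M) of
        None \<Rightarrow> cf
      | Some (q, rd, q', wr, mvs) \<Rightarrow>
          \<lparr>cstate = q',
           ipos = map2 (\<lambda>p m. p + mv_delta m) (ipos cf) (take (ninp M) mvs),
           wtapes = map2 (\<lambda>t (p, s). t(p := s)) (wtapes cf) (zip (wpos cf) wr),
           wpos = map2 (\<lambda>p m. p + mv_delta m) (wpos cf) (drop (ninp M) mvs)\<rparr>))"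

definition tm_run :: "tm \<Rightarrow> bool list list \<Rightarrow> nat \<Rightarrow> config" where
  "tm_run M xs t = (tm_step M xs ^^ t) (init_config M)"

definition tm_computes_in_time :: "tm \<Rightarrow> (bool list \<Rightarrow> bool) \<Rightarrow> (nat \<Rightarrow> real) \<Rightarrow> bool" where
  "tm_computes_in_time M g T \<longleftrightarrow> wf_tm M \<and> ninp M = 1 \<and>
     (\<forall>x. \<exists>t. real t \<le> T (length x) \<and>
            cstate (tm_run M [x] t) = (if g x then 1 else 2))"

text \<open>The properties of U^c used: (i) every g computable by a Turing machine
  in time O(n^c') with c' < c has a program h with U(h,x) = g(x) for all x of
  sufficiently large length; (ii) every program on which U is defined has
  the form E(T)u, hence length at least 2.
  Time O(n^c') for a total machine is rendered as a bound K*n^c' + K.\<close>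
definition univ_interp_props :: "nat \<Rightarrow> interp \<Rightarrow> bool" where
  "univ_interp_props c U \<longleftrightarrow>
     (\<forall>M g (c'::real) (K::real). c' < real c \<and>
        tm_computes_in_time M g (\<lambda>n. K * real n powr c' + K) \<longrightarrow>
        (\<exists>h N. \<forall>x. N \<le> length x \<longrightarrow> U h x = Some (g x))) \<and>
     (\<forall>h x. U h x \<noteq> None \<longrightarrow> 2 \<le> length h)"

text \<open>A circuit is a list of vertices in topological order (every DAG admits
  one); parents are referenced by earlier indices; input indices are 0-based
  (0..n-1, corresponding to 1..n in the paper). The sink is the last vertex.\<close>
datatype gate = Inp nat | GAnd nat nat | GOr nat nat | GNot nat

fun gate_uses :: "gate \<Rightarrow> nat \<Rightarrow> bool" where
  "gate_uses (Inp j) i = False"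
| "gate_uses (GAnd a b) i = (i = a \<or> i = b)"
| "gate_uses (GOr a b) i = (i = a \<or> i = b)"
| "gate_uses (GNot a) i = (i = a)"

fun gate_ok :: "nat \<Rightarrow> nat \<Rightarrow> gate \<Rightarrow> bool" where
  "gate_ok n i (Inp j) = (j < n)"
| "gate_ok n i (GAnd a b) = (a < i \<and> b < i)"
| "gate_ok n i (GOr a b) = (a < i \<and> b < i)"
| "gate_ok n i (GNot a) = (a < i)"

definition wf_circuit :: "nat \<Rightarrow> gate list \<Rightarrow> bool" where
  "wf_circuit n C \<longleftrightarrow> C \<noteq> [] \<and>
     (\<forall>i < length C. gate_ok n i (C ! i)) \<and>
     (\<forall>i. i + 1 < length C \<longrightarrow> (\<exists>k < length C. gate_uses (C ! k) i))"

fun gate_val :: "bool list \<Rightarrow> bool list \<Rightarrow> gate \<Rightarrow> bool" where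
  "gate_val x vs (Inp j) = x ! j"
| "gate_val x vs (GAnd a b) = (vs ! a \<and> vs ! b)"
| "gate_val x vs (GOr a b) = (vs ! a \<or> vs ! b)"
| "gate_val x vs (GNot a) = (\<not> vs ! a)"

definition circ_vals :: "gate list \<Rightarrow> bool list \<Rightarrow> bool list" where
  "circ_vals C x = foldl (\<lambda>vs g. vs @ [gate_val x vs g]) [] C"

definition circuit_computes :: "nat \<Rightarrow> gate list \<Rightarrow> (bool list \<Rightarrow> bool) \<Rightarrow> bool" where
  "circuit_computes n C f \<longleftrightarrow> wf_circuit n C \<and>
     (\<forall>x. length x = n \<longrightarrow> last (circ_vals C x) = f x)"

definition clog2 :: "nat \<Rightarrow> nat" where
  "clog2 m = nat \<lceil>log 2 (real m)\<rceil>"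

definition enc_len :: "nat \<Rightarrow> nat \<Rightarrow> nat" where
  "enc_len s n = 2 * clog2 n + 2 + s * (3 + max (2 * clog2 s) (clog2 n))"

definition circ_size :: "nat \<Rightarrow> (bool list \<Rightarrow> bool) \<Rightarrow> nat" where
  "circ_size n f = (LEAST m. \<exists>C. circuit_computes n C f \<and> m = enc_len (length C) n)"

end

theory Submission
  imports Defs
begin

text \<open>The conjunction of all input bits is decided by a single left-to-right scan, in linear time.
  Hence, for all large n, the universal interpreter computes it with one fixed program h, so its
  description size is at most |h|. A circuit computing the conjunction has to read every input
  bit, so it has at least n vertices, and each vertex costs at least log n bits in the encoding.
  The ratio for this single function therefore grows like n log n / |h|.\<close>

definition all_ones :: "bool list \<Rightarrow> bool" where
  "all_ones x \<longleftrightarrow> (\<forall>i<length x. x ! i)"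

definition scan_tm :: tm where
  "scan_tm = \<lparr>ninp = 1, nwork = 0,
     rules = [(0, [S1], 0, [], [MoveR]), (0, [S0], 2, [], [MoveN]), (0, [Blank], 1, [], [MoveN])]\<rparr>"

definition scanning :: "nat \<Rightarrow> config" where
  "scanning t = \<lparr>cstate = 0, ipos = [int t], wtapes = [], wpos = []\<rparr>"

lemma tm_run_Suc: "tm_run M xs (Suc t) = tm_step M xs (tm_run M xs t)"
  by (simp add: tm_run_def)

lemma tm_step_scanning:
  "tm_step scan_tm [x] (scanning t) =
     (if t < length x then (if x ! t then scanning (Suc t) else scanning t\<lparr>cstate := 2\<rparr>)
      else scanning t\<lparr>cstate := 1\<rparr>)"
  by (simp add: tm_step_def scan_tm_def scanning_def tape_of_def)

lemma tm_run_scan_tm: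
  assumes "t \<le> length x" and "\<forall>i<t. x ! i"
  shows "tm_run scan_tm [x] t = scanning t"
  using assms
proof (induction t)
  case 0
  then show ?case by (simp add: tm_run_def init_config_def scan_tm_def scanning_def)
next
  case (Suc t)
  then show ?case by (simp add: tm_run_Suc tm_step_scanning)
qed

lemma scan_tm_computes_all_ones:
  "tm_computes_in_time scan_tm all_ones (\<lambda>n. 1 * real n powr 1 + 1)"
  unfolding tm_computes_in_time_def
proof (intro conjI allI)
  show "wf_tm scan_tm" "ninp scan_tm = 1"
    by (simp_all add: wf_tm_def scan_tm_def)
next
  fix x :: "bool list"
  define t where "t = (LEAST i. i = length x \<or> \<not> x ! i)"
  have t_stop: "t = length x \<or> \<not> x ! t"
    unfolding t_def by (rule LeastI[of _ "length x"]) simp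
  have t_le: "t \<le> length x"
    unfolding t_def by (rule Least_le) simp
  have prefix: "\<forall>i<t. x ! i"
    using not_less_Least t_le unfolding t_def by fastforce
  have all_ones_iff: "all_ones x \<longleftrightarrow> t = length x"
    using t_stop t_le prefix unfolding all_ones_def by (metis le_neq_implies_less)
  have "tm_run scan_tm [x] (Suc t) = tm_step scan_tm [x] (scanning t)"
    by (simp add: tm_run_Suc tm_run_scan_tm[OF t_le prefix])
  then have "cstate (tm_run scan_tm [x] (Suc t)) = (if all_ones x then 1 else 2)"
    unfolding tm_step_scanning using t_stop t_le all_ones_iff by (auto simp: scanning_def)
  moreover have "real (Suc t) \<le> 1 * real (length x) powr 1 + 1"
    using t_le by (cases "length x = 0") auto
  ultimately show "\<exists>t. real t \<le> 1 * real (length x) powr 1 + 1 \<and>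
      cstate (tm_run scan_tm [x] t) = (if all_ones x then 1 else 2)"
    by blast
qed

lemma univ_interp_program_all_ones:
  assumes "c > 1" and "univ_interp_props c U"
  obtains h N where "\<forall>x. N \<le> length x \<longrightarrow> U h x = Some (all_ones x)"
proof -
  have "1 < real c" using assms(1) by simp
  then show thesis
    using assms(2) scan_tm_computes_all_ones that unfolding univ_interp_props_def by blast
qed

lemma prog_size_le:
  assumes "\<forall>x. length x = n \<longrightarrow> \<phi> h x = Some (f x)"
  shows "prog_size \<phi> n f \<le> length h"
  unfolding prog_size_def by (rule Least_le) (use assms in blast)

lemma prog_size_witness:
  assumes "has_prog \<phi> n f"
  obtains h where "length h = prog_size \<phi> n f" and "\<forall>x. length x = n \<longrightarrow> \<phi> h x = Some (f x)"
  using LeastI_ex[of "\<lambda>k. \<exists>h. length h = k \<and> (\<forall>x. length x = n \<longrightarrow> \<phi> h x = Some (f x))"]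
    assms unfolding has_prog_def prog_size_def by blast

text \<open>Needed since x / 0 = 0: a ratio with program size 0 would carry no information.\<close>
lemma univ_prog_size_ge_2:
  assumes "univ_interp_props c U" and "has_prog U n f"
  shows "2 \<le> prog_size U n f"
proof -
  obtain h where h: "length h = prog_size U n f" "\<forall>x. length x = n \<longrightarrow> U h x = Some (f x)"
    using prog_size_witness[OF assms(2)] .
  then have "U h (replicate n True) \<noteq> None" by simp
  then show ?thesis using assms(1) h(1) unfolding univ_interp_props_def by metis
qed

lemma log2_le_clog2: "log 2 (real n) \<le> real (clog2 n)"
proof -
  have "(of_int z :: real) \<le> real (nat z)" for z :: int by (cases "z \<ge> 0") auto
  then show ?thesis unfolding clog2_def using le_of_int_ceiling order_trans by blast
qed

lemma enc_len_ge: "s * clog2 n \<le> enc_len s n"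
proof -
  have "s * clog2 n \<le> s * (3 + max (2 * clog2 s) (clog2 n))"
    by (intro mult_le_mono2) simp
  then show ?thesis unfolding enc_len_def by linarith
qed

lemma circ_size_ge:
  assumes "circuit_computes n C f" and "\<And>C. circuit_computes n C f \<Longrightarrow> s \<le> length C"
  shows "s * clog2 n \<le> circ_size n f"
proof -
  obtain C' where C': "circuit_computes n C' f" "circ_size n f = enc_len (length C') n"
    using LeastI_ex[of "\<lambda>m. \<exists>C. circuit_computes n C f \<and> m = enc_len (length C) n"] assms(1)
    unfolding circ_size_def by blast
  have "s * clog2 n \<le> length C' * clog2 n" using assms(2)[OF C'(1)] by simp
  also have "\<dots> \<le> circ_size n f" using C'(2) enc_len_ge by simp
  finally show ?thesis .
qed

lemma length_foldl_gate_val: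
  "length (foldl (\<lambda>vs g. vs @ [gate_val x vs g]) vs C) = length vs + length C"
  by (induction C arbitrary: vs) auto

lemma length_circ_vals: "length (circ_vals C x) = length C"
  by (simp add: circ_vals_def length_foldl_gate_val)

lemma circ_vals_append:
  "circ_vals (C @ D) x = foldl (\<lambda>vs g. vs @ [gate_val x vs g]) (circ_vals C x) D"
  by (simp add: circ_vals_def)

text \<open>Vertex 2k of the chain is the conjunction of the inputs 0, ..., k.\<close>
fun and_chain :: "nat \<Rightarrow> gate list" where
  "and_chain 0 = [Inp 0]"
| "and_chain (Suc k) = and_chain k @ [Inp (Suc k), GAnd (2 * k) (2 * k + 1)]"

lemma length_and_chain: "length (and_chain k) = 2 * k + 1"
  by (induction k) auto

lemma last_circ_vals_and_chain: "last (circ_vals (and_chain k) x) \<longleftrightarrow> (\<forall>i\<le>k. x ! i)"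
proof (induction k)
  case 0
  then show ?case by (simp add: circ_vals_def)
next
  case (Suc k)
  let ?vs = "circ_vals (and_chain k) x"
  have len: "length ?vs = 2 * k + 1" by (simp add: length_circ_vals length_and_chain)
  then have "?vs \<noteq> []" by auto
  then have "?vs ! (2 * k) = last ?vs" by (simp add: last_conv_nth len)
  then have "last (circ_vals (and_chain (Suc k)) x) \<longleftrightarrow> last ?vs \<and> x ! Suc k"
    using len by (simp add: circ_vals_append nth_append)
  also have "\<dots> \<longleftrightarrow> (\<forall>i\<le>Suc k. x ! i)" using Suc.IH le_Suc_eq by auto
  finally show ?case .
qed

lemma gate_ok_mono: "gate_ok n i g \<Longrightarrow> n \<le> m \<Longrightarrow> gate_ok m i g"
  by (cases g) auto

lemma wf_and_chain: "wf_circuit (Suc k) (and_chain k)"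
proof (induction k)
  case 0
  then show ?case by (simp add: wf_circuit_def)
next
  case (Suc k)
  let ?C = "and_chain k" and ?D = "and_chain (Suc k)"
  have len: "length ?C = 2 * k + 1" by (simp add: length_and_chain)
  have ok: "\<forall>i<length ?C. gate_ok (Suc k) i (?C ! i)"
    and used: "\<forall>i. i + 1 < length ?C \<longrightarrow> (\<exists>j<length ?C. gate_uses (?C ! j) i)"
    using Suc.IH by (auto simp: wf_circuit_def)
  have "gate_ok (Suc (Suc k)) i (?D ! i)" if "i < length ?D" for i
  proof (cases "i < length ?C")
    case True
    then show ?thesis using ok gate_ok_mono[of "Suc k" i] by (simp add: nth_append)
  next
    case False
    then have "i = 2 * k + 1 \<or> i = 2 * k + 2" using that len by auto
    then show ?thesis using len by (auto simp: nth_append)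
  qed
  moreover have "\<exists>j<length ?D. gate_uses (?D ! j) i" if "i + 1 < length ?D" for i
  proof (cases "i + 1 < length ?C")
    case True
    then obtain j where "j < length ?C" "gate_uses (?C ! j) i" using used by blast
    then show ?thesis by (intro exI[of _ j]) (simp add: nth_append)
  next
    case False
    then have "i = 2 * k \<or> i = 2 * k + 1" using that len by auto
    then show ?thesis using len by (intro exI[of _ "2 * k + 2"]) (auto simp: nth_append)
  qed
  ultimately show ?case by (simp add: wf_circuit_def)
qed

lemma and_chain_computes_all_ones: "circuit_computes (Suc k) (and_chain k) all_ones"
  using wf_and_chain last_circ_vals_and_chain
  by (simp add: circuit_computes_def all_ones_def less_Suc_eq_le)

lemma circ_vals_cong:
  assumes "\<And>j. Inp j \<in> set C \<Longrightarrow> x ! j = y ! j"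
  shows "circ_vals C x = circ_vals C y"
proof -
  have "foldl (\<lambda>vs g. vs @ [gate_val x vs g]) vs C = foldl (\<lambda>vs g. vs @ [gate_val y vs g]) vs C"
    for vs
    using assms
  proof (induction C arbitrary: vs)
    case (Cons g C)
    then have "gate_val x vs g = gate_val y vs g" by (cases g) auto
    then show ?case using Cons by simp
  qed simp
  then show ?thesis by (simp add: circ_vals_def)
qed

lemma circuit_reads_relevant_input:
  assumes "circuit_computes n C f" and "length x = n" and "f (x[j := b]) \<noteq> f x"
  shows "Inp j \<in> set C"
proof (rule ccontr)
  assume "Inp j \<notin> set C"
  then have "circ_vals C (x[j := b]) = circ_vals C x"
    by (intro circ_vals_cong) (metis nth_list_update_neq)
  moreover have "\<forall>y. length y = n \<longrightarrow> last (circ_vals C y) = f y"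
    using assms(1) by (simp add: circuit_computes_def)
  ultimately have "f (x[j := b]) = f x" using assms(2) by (metis length_list_update)
  then show False using assms(3) by contradiction
qed

lemma length_circuit_all_ones:
  assumes "circuit_computes n C all_ones"
  shows "n \<le> length C"
proof -
  have "Inp ` {..<n} \<subseteq> set C"
  proof
    fix g assume "g \<in> Inp ` {..<n}"
    then obtain j where j: "j < n" "g = Inp j" by blast
    then have "all_ones ((replicate n True)[j := False]) \<noteq> all_ones (replicate n True)"
      by (auto simp: all_ones_def)
    then show "g \<in> set C" using circuit_reads_relevant_input[OF assms length_replicate] j by simp
  qed
  have "n = card (Inp ` {..<n})" by (simp add: card_image inj_on_def)
  also have "\<dots> \<le> card (set C)" using \<open>Inp ` {..<n} \<subseteq> set C\<close> by (simp add: card_mono)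
  also have "\<dots> \<le> length C" by (rule card_length)
  finally show ?thesis .
qed

lemma circ_size_all_ones_ge:
  assumes "1 \<le> n"
  shows "n * clog2 n \<le> circ_size n all_ones"
proof -
  obtain k where "n = Suc k" using assms by (cases n) auto
  then show ?thesis
    using circ_size_ge[of n "and_chain k" all_ones n] and_chain_computes_all_ones
      length_circuit_all_ones by blast
qed

definition restrict_length :: "nat \<Rightarrow> (bool list \<Rightarrow> bool) \<Rightarrow> bool list \<Rightarrow> bool" where
  "restrict_length n f x \<longleftrightarrow> length x = n \<and> f x"

lemma finite_range_restrict_length: "finite (range (restrict_length n))"
proof -
  have "restrict_length n f \<in> (\<lambda>A x. x \<in> A) ` Pow {x :: bool list. length x = n}" for f
    by (rule image_eqI[where x = "{y. length y = n \<and> f y}"]) (auto simp: restrict_length_def)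
  then have "range (restrict_length n) \<subseteq> (\<lambda>A x. x \<in> A) ` Pow {x :: bool list. length x = n}"
    by blast
  moreover have "finite {x :: bool list. length x = n}"
    using finite_lists_length_eq[of "UNIV :: bool set" n] by simp
  ultimately show ?thesis by (meson finite_Pow_iff finite_imageI finite_subset)
qed

lemma finite_image_length_local:
  assumes "\<And>f. F (restrict_length n f) = F f"
  shows "finite {F f | f. P f}"
proof (rule finite_subset)
  show "{F f | f. P f} \<subseteq> F ` range (restrict_length n)"
  proof
    fix v assume "v \<in> {F f | f. P f}"
    then obtain f where "v = F (restrict_length n f)" using assms by auto
    then show "v \<in> F ` range (restrict_length n)" by blast
  qed
  show "finite (F ` range (restrict_length n))"
    using finite_range_restrict_length by blast
qed

lemma finite_ratio_set: "finite {real (circ_size n f) / real (prog_size U n f) | f. has_prog U n f}"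
  by (rule finite_image_length_local[where n = n])
    (simp add: restrict_length_def circ_size_def circuit_computes_def prog_size_def)

lemma ratio_le_Sup:
  assumes "has_prog U n f"
  shows "real (circ_size n f) / real (prog_size U n f)
           \<le> Sup {real (circ_size n f) / real (prog_size U n f) | f. has_prog U n f}"
  using assms by (intro cSup_upper bdd_above_finite[OF finite_ratio_set]) blast

lemma Sup_ratio_ge:
  assumes "univ_interp_props c U" and "1 \<le> n"
    and h: "\<forall>x. length x = n \<longrightarrow> U h x = Some (all_ones x)"
  shows "real n * log 2 (real n) / real (length h)
           \<le> Sup {real (circ_size n f) / real (prog_size U n f) | f. has_prog U n f}"
proof -
  have has: "has_prog U n all_ones" using h unfolding has_prog_def by blast
  have "real n * log 2 (real n) \<le> real n * real (clog2 n)"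
    by (intro mult_left_mono log2_le_clog2) simp
  also have "\<dots> \<le> real (circ_size n all_ones)"
    using circ_size_all_ones_ge[OF assms(2)] by (simp flip: of_nat_mult)
  finally have "real n * log 2 (real n) / real (length h) \<le> real (circ_size n all_ones) / real (length h)"
    by (simp add: divide_right_mono)
  also have "\<dots> \<le> real (circ_size n all_ones) / real (prog_size U n all_ones)"
    using prog_size_le[of n U h all_ones] h univ_prog_size_ge_2[OF assms(1) has]
    by (intro divide_left_mono mult_pos_pos) auto
  also have "\<dots> \<le> Sup {real (circ_size n f) / real (prog_size U n f) | f. has_prog U n f}"
    by (rule ratio_le_Sup[OF has])
  finally show ?thesis .
qed

theorem mainTheorem12:
  fixes c :: nat and U :: interp
  assumes "c > 1"
    and "univ_interp_props c U"
  shows "(\<lambda>n. Sup {real (circ_size n f) / real (prog_size U n f) | f. has_prog U n f})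
           \<in> \<Omega>(\<lambda>n. real n * ln (real n))"
proof -
  obtain h N where h: "\<forall>x. N \<le> length x \<longrightarrow> U h x = Some (all_ones x)"
    using univ_interp_program_all_ones[OF assms] .
  have "2 \<le> length h"
    using univ_prog_size_ge_2[OF assms(2), of N] prog_size_le[of N U h all_ones] h
    unfolding has_prog_def by fastforce
  define K where "K = 1 / (ln 2 * real (length h))"
  have "K > 0" using \<open>2 \<le> length h\<close> by (auto simp: K_def zero_less_mult_iff)
  moreover have "K * norm (real n * ln (real n))
      \<le> norm (Sup {real (circ_size n f) / real (prog_size U n f) | f. has_prog U n f})"
    if "max N 1 \<le> n" for n
  proof -
    have "K * norm (real n * ln (real n)) = real n * log 2 (real n) / real (length h)"
      using that by (simp add: K_def log_def field_simps)
    also have "\<dots> \<le> Sup {real (circ_size n f) / real (prog_size U n f) | f. has_prog U n f}"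
      using Sup_ratio_ge[OF assms(2)] h that by simp
    finally show ?thesis by simp
  qed
  ultimately show ?thesis
    by (intro landau_omega.bigI[of K] eventually_at_top_linorderI[of "max N 1"])
qed

end
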